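(* Let $D\geq 2$ and $k\geq 1$. There exist positive constants $c$, $C'$, $C''$ depending only on $D$ and $k$ such that the following holds. Let $0<\varepsilon<c$ and set $\eta=\exp(-C'/\varepsilon)$ and $\delta=\exp(-C''/\varepsilon)$. Let $E\subset\mathbb R^D$ be finite with $\mathrm{card}(E)\leq k$, and let $\phi:E\to\mathbb R^D$ satisfy \[(1+\delta)^{-1}|x-y|\leq|\phi(x)-\phi(y)|\leq(1+\delta)|x-y|\quad\text{for all }x,y\in E.\] If $\phi$ has a negative $\eta$-block, then $\phi$ cannot be extended to a proper $\delta$-distorted diffeomorphism of $\mathbb R^D$.
   Context: Work in $\mathbb R^D$ with Euclidean norm. An affine map $x\mapsto Lx+b$ is proper if $\det L>0$, improper if $\det L<0$. For $\delta>0$, a $\delta$-distorted diffeomorphism is a diffeomorphism $\Phi$ of $\mathbb R^D$ onto $\mathbb R^D$ with $(1+\delta)^{-1}I\leq(\nabla\Phi(x))^T\nabla\Phi(x)\leq(1+\delta)I$ for all $x$; it is proper if $\det\nabla\Phi>0$ everywhere. $V_D(z_0,\dots,z_D)$ is the $D$-dimensional volume of the simplex with vertices $z_0,\dots,z_D$. For finite $E$, $\phi:E\to\mathbb R^D$ and $0<\eta<1$, a positive (resp. negative) $\eta$-block for $\phi$ is a $(D+1)$-tuple $(x_0,\dots,x_D)$ of points of $E$ with $V_D(x_0,\dots,x_D)\geq\eta^D(\mathrm{diam}\{x_0,\dots,x_D\})^D$ such that the unique affine map $T$ with $T(x_i)=\phi(x_i)$, $i=0,\dots,D$, is proper (resp.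 improper). *)

theory Defs
  imports "HOL-Analysis.Analysis"
begin

text \<open>We work in real^'n, so D = CARD('n). A (D+1)-tuple (x_0,...,x_D) of points is
  represented by a base point x0 together with a family xs indexed by the D elements of 'n.\<close>

definition simplex_volume :: "real^'n \<Rightarrow> ('n \<Rightarrow> real^'n) \<Rightarrow> real" where
  "simplex_volume x0 xs = measure lebesgue (convex hull (insert x0 (range xs)))"

definition tuple_diam :: "real^'n \<Rightarrow> ('n \<Rightarrow> real^'n) \<Rightarrow> real" where
  "tuple_diam x0 xs = diameter (insert x0 (range xs))"

definition interpolates :: "real^'n^'n \<Rightarrow> real^'n \<Rightarrow> (real^'n \<Rightarrow> real^'n)
    \<Rightarrow> real^'n \<Rightarrow> ('n \<Rightarrow> real^'n) \<Rightarrow> bool" where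
  "interpolates L b \<phi> x0 xs \<longleftrightarrow> L *v x0 + b = \<phi> x0 \<and> (\<forall>i. L *v xs i + b = \<phi> (xs i))"

definition negative_block :: "real \<Rightarrow> (real^'n) set \<Rightarrow> (real^'n \<Rightarrow> real^'n)
    \<Rightarrow> real^'n \<Rightarrow> ('n \<Rightarrow> real^'n) \<Rightarrow> bool" where
  "negative_block \<eta> E \<phi> x0 xs \<longleftrightarrow>
     x0 \<in> E \<and> (\<forall>i. xs i \<in> E) \<and>
     simplex_volume x0 xs \<ge> \<eta> ^ CARD('n) * (tuple_diam x0 xs) ^ CARD('n) \<and>
     (\<exists>!Lb. interpolates (fst Lb) (snd Lb) \<phi> x0 xs) \<and>
     (\<forall>L b. interpolates L b \<phi> x0 xs \<longrightarrow> det L < 0)"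

definition has_negative_block :: "real \<Rightarrow> (real^'n) set \<Rightarrow> (real^'n \<Rightarrow> real^'n) \<Rightarrow> bool" where
  "has_negative_block \<eta> E \<phi> \<longleftrightarrow> (\<exists>x0 xs. negative_block \<eta> E \<phi> x0 xs)"

definition diffeo :: "(real^'n \<Rightarrow> real^'n) \<Rightarrow> bool" where
  "diffeo \<Phi> \<longleftrightarrow> bij \<Phi> \<and> (\<forall>x. \<Phi> differentiable (at x)) \<and>
     continuous_on UNIV (\<lambda>x. matrix (frechet_derivative \<Phi> (at x))) \<and>
     (\<forall>y. inv \<Phi> differentiable (at y)) \<and>
     continuous_on UNIV (\<lambda>y. matrix (frechet_derivative (inv \<Phi>) (at y)))"

text \<open>(1+delta)^{-1} I \<le> (grad Phi)^T grad Phi \<le> (1+delta) I, as quadratic forms: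
  v^T M^T M v = |M v|^2.\<close>
definition proper_distorted_diffeo :: "real \<Rightarrow> (real^'n \<Rightarrow> real^'n) \<Rightarrow> bool" where
  "proper_distorted_diffeo \<delta> \<Phi> \<longleftrightarrow> diffeo \<Phi> \<and>
     (\<forall>x. let M = matrix (frechet_derivative \<Phi> (at x)) in
        det M > 0 \<and>
        (\<forall>v. inverse (1 + \<delta>) * (v \<bullet> v) \<le> (M *v v) \<bullet> (M *v v) \<and>
             (M *v v) \<bullet> (M *v v) \<le> (1 + \<delta>) * (v \<bullet> v)))"

end

theory Submission
  imports Defs "HOL-Combinatorics.Permutations"
begin

text \<open>Let \<open>A\<close> be the matrix of edge vectors \<open>x\<^sub>i - x\<^sub>0\<close> of a negative \<open>\<eta>\<close>-block, so that
  \<open>|det A| \<ge> \<eta>\<^sup>D d\<^sup>D\<close>, and suppose a proper \<open>\<delta>\<close>-distorted diffeomorphism \<open>\<Phi>\<close> extends \<open>\<phi>\<close>.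
  The secant matrices with rows \<open>(\<Phi>(x\<^sub>0 + t a\<^sub>i) - \<Phi>(x\<^sub>0)) / t\<close> have determinant of the sign of
  \<open>det A\<close> as \<open>t \<rightarrow> 0\<close> (orientation of \<open>D\<Phi>\<close>) and of the opposite sign at \<open>t = 1\<close> (orientation of the
  interpolating map), so one of them is singular. But \<open>\<Phi>\<close> rescaled is almost isometric, so that
  secant matrix has nearly the Gram matrix of \<open>A\<close>, and a dependency among its rows forces
  \<open>det A\<^sup>2 = O(\<delta> d\<^sup>2\<^sup>D)\<close>. Hence \<open>\<eta>\<^sup>2\<^sup>D = O(\<delta>)\<close>, which fails for \<open>\<eta> = exp(-1/\<epsilon>)\<close>,
  \<open>\<delta> = \<eta>\<^sup>2\<^sup>D\<^sup>+\<^sup>1\<close> and small \<open>\<epsilon>\<close>.\<close>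

section \<open>Volumes of linear images in \<open>real^'n\<close>\<close>

text \<open>The library proves the change of variables formula only for index types that are
  wellorders, so coordinates are relabelled along a wellordered copy of the index type.\<close>

typedef 'a nat_ordered = "UNIV :: 'a set" by simp

instance nat_ordered :: (finite) finite
proof
  have "(UNIV :: 'a nat_ordered set) = range Abs_nat_ordered"
    by (metis Abs_nat_ordered_cases surj_def)
  then show "finite (UNIV :: 'a nat_ordered set)" by (metis finite finite_imageI)
qed

instantiation nat_ordered :: (finite) wellorder
begin

definition less_eq_nat_ordered :: "'a nat_ordered \<Rightarrow> 'a nat_ordered \<Rightarrow> bool" where
  "less_eq_nat_ordered x y \<longleftrightarrow> to_nat (Rep_nat_ordered x) \<le> to_nat (Rep_nat_ordered y)"

definition less_nat_ordered :: "'a nat_ordered \<Rightarrow> 'a nat_ordered \<Rightarrow> bool" where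
  "less_nat_ordered x y \<longleftrightarrow> to_nat (Rep_nat_ordered x) < to_nat (Rep_nat_ordered y)"

instance
proof
  fix x y z :: "'a nat_ordered"
  show "x < y \<longleftrightarrow> x \<le> y \<and> \<not> y \<le> x" "x \<le> y \<or> y \<le> x"
    by (auto simp: less_eq_nat_ordered_def less_nat_ordered_def)
  show "x \<le> x" "x \<le> y \<Longrightarrow> y \<le> z \<Longrightarrow> x \<le> z"
    by (simp_all add: less_eq_nat_ordered_def)
  show "x \<le> y \<Longrightarrow> y \<le> x \<Longrightarrow> x = y"
    by (simp add: less_eq_nat_ordered_def Rep_nat_ordered_inject)
next
  fix P :: "'a nat_ordered \<Rightarrow> bool" and a
  assume step: "\<And>x. (\<And>y. y < x \<Longrightarrow> P y) \<Longrightarrow> P x"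
  show "P a"
    by (induct a rule: measure_induct_rule[where f="\<lambda>x. to_nat (Rep_nat_ordered x)"])
       (auto intro: step simp: less_nat_ordered_def)
qed

end

definition relabel :: "real^'n::finite \<Rightarrow> real^'n nat_ordered" where
  "relabel x = (\<chi> j. x $ Rep_nat_ordered j)"

definition unlabel :: "real^'n::finite nat_ordered \<Rightarrow> real^'n" where
  "unlabel y = (\<chi> i. y $ Abs_nat_ordered i)"

lemma relabel_unlabel [simp]: "relabel (unlabel y) = y"
  by (simp add: relabel_def unlabel_def vec_eq_iff Rep_nat_ordered_inverse)

lemma unlabel_relabel [simp]: "unlabel (relabel x) = x"
  by (simp add: relabel_def unlabel_def vec_eq_iff Abs_nat_ordered_inverse)

lemma linear_relabel: "linear relabel"
  by (auto simp: linear_iff relabel_def vec_eq_iff)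

lemma linear_unlabel: "linear unlabel"
  by (auto simp: linear_iff unlabel_def vec_eq_iff)

lemma continuous_on_relabel: "continuous_on S relabel"
  unfolding relabel_def by (intro continuous_on_vec_lambda continuous_intros)

lemma continuous_on_unlabel: "continuous_on S unlabel"
  unfolding unlabel_def by (intro continuous_on_vec_lambda continuous_intros)

lemma prod_inner_Basis_cart: "(\<Prod>b\<in>Basis. v \<bullet> b) = (\<Prod>j\<in>UNIV. v $ j)"
  for v :: "real^'m::finite"
  by (simp add: Basis_vec_def cart_eq_inner_axis axis_eq_axis prod.UNION_disjoint)

lemma distr_lborel_relabel: "distr lborel borel (relabel :: real^'n::finite \<Rightarrow> _) = lborel"
proof (rule lborel_eqI[symmetric])
  have meas: "relabel \<in> borel_measurable (lborel :: (real^'n) measure)"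
    using borel_measurable_continuous_onI[OF continuous_on_relabel] by simp
  fix l u :: "real^('n nat_ordered)"
  assume le: "\<And>b. b \<in> Basis \<Longrightarrow> l \<bullet> b \<le> u \<bullet> b"
  have le': "l $ j \<le> u $ j" for j
    using le[of "axis j 1"] by (auto simp: Basis_vec_def cart_eq_inner_axis)
  have "relabel -` box l u = box (unlabel l) (unlabel u)"
    by (auto simp: mem_box_cart relabel_def unlabel_def Abs_nat_ordered_inverse)
       (metis Rep_nat_ordered_inverse Abs_nat_ordered_inverse UNIV_I)+
  then have "emeasure (distr lborel borel relabel) (box l u) = emeasure lborel (box (unlabel l) (unlabel u))"
    by (simp add: emeasure_distr[OF meas])
  also have "\<dots> = (\<Prod>b\<in>Basis. (unlabel u - unlabel l) \<bullet> b)"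
  proof (rule emeasure_lborel_box)
    fix b :: "real^'n"
    assume "b \<in> Basis"
    then obtain j where b: "b = axis j 1"
      by (auto simp: Basis_vec_def)
    show "unlabel l \<bullet> b \<le> unlabel u \<bullet> b"
      using le' by (simp add: b cart_eq_inner_axis[symmetric] unlabel_def)
  qed
  also have "\<dots> = (\<Prod>i\<in>UNIV. (u - l) $ Abs_nat_ordered i)"
    by (simp add: prod_inner_Basis_cart unlabel_def)
  also have "\<dots> = (\<Prod>j\<in>UNIV. (u - l) $ j)"
    by (intro arg_cong[where f=ennreal] prod.reindex_bij_witness[where i=Rep_nat_ordered and j=Abs_nat_ordered])
       (auto simp: Abs_nat_ordered_inverse Rep_nat_ordered_inverse)
  finally show "emeasure (distr lborel borel relabel) (box l u) = (\<Prod>b\<in>Basis. (u - l) \<bullet> b)"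
    by (simp add: prod_inner_Basis_cart)
qed simp


lemma measure_relabel_image:
  fixes S :: "(real^'n::finite) set"
  assumes "S \<in> sets borel"
  shows "measure lborel (relabel ` S) = measure lborel S"
proof -
  have meas: "relabel \<in> borel_measurable (lborel :: (real^'n) measure)"
    using borel_measurable_continuous_onI[OF continuous_on_relabel] by simp
  have img: "relabel ` S = unlabel -` S"
    by (auto simp: image_iff) (metis relabel_unlabel)
  have "relabel ` S \<in> sets borel"
    unfolding img using measurable_sets[OF borel_measurable_continuous_onI[OF continuous_on_unlabel] assms]
    by simp
  then have "measure lborel (relabel ` S) = measure lborel (relabel -` relabel ` S)"
    using measure_distr[OF meas, of "relabel ` S"] by (simp add: distr_lborel_relabel)
  also have "relabel -` relabel ` S = S"
    by (auto simp: image_iff) (metis unlabel_relabel)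
  finally show ?thesis .
qed

lemma sign_conj_permutation:
  fixes q :: "'n::finite nat_ordered \<Rightarrow> 'n nat_ordered"
  assumes "q permutes UNIV"
  shows "(Rep_nat_ordered \<circ> q \<circ> Abs_nat_ordered) permutes UNIV"
    and "sign (Rep_nat_ordered \<circ> q \<circ> Abs_nat_ordered) = sign q"
proof -
  interpret permutes_bij_finite q UNIV UNIV Rep_nat_ordered Abs_nat_ordered
      "\<lambda>x. if x \<in> UNIV then Rep_nat_ordered (q (Abs_nat_ordered x)) else x"
  proof unfold_locales
    show "bij_betw Rep_nat_ordered UNIV UNIV"
      by (metis Rep_nat_ordered_inverse Abs_nat_ordered_inverse UNIV_I bij_betw_byWitness subset_UNIV)
  qed (auto simp: assms Rep_nat_ordered_inverse)
  have "(\<lambda>x. if x \<in> UNIV then Rep_nat_ordered (q (Abs_nat_ordered x)) else x)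
      = Rep_nat_ordered \<circ> q \<circ> Abs_nat_ordered"
    by (simp add: fun_eq_iff)
  with permutes_p' sign_p' show "(Rep_nat_ordered \<circ> q \<circ> Abs_nat_ordered) permutes UNIV"
      "sign (Rep_nat_ordered \<circ> q \<circ> Abs_nat_ordered) = sign q"
    by simp_all
qed

lemma det_relabel:
  "det (\<chi> j j'. X $ Rep_nat_ordered j $ Rep_nat_ordered j') = det (X :: real^'n::finite^'n)"
proof -
  let ?Y = "(\<chi> j j'. X $ Rep_nat_ordered j $ Rep_nat_ordered j') :: real^('n nat_ordered)^('n nat_ordered)"
  have "(\<Sum>q | q permutes UNIV. of_int (sign q) * (\<Prod>j\<in>UNIV. ?Y $ j $ q j))
      = (\<Sum>p | p permutes UNIV. of_int (sign p) * (\<Prod>i\<in>UNIV. X $ i $ p i))"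
  proof (rule sum.reindex_bij_witness[where i="\<lambda>p. Abs_nat_ordered \<circ> p \<circ> Rep_nat_ordered"
        and j="\<lambda>q. Rep_nat_ordered \<circ> q \<circ> Abs_nat_ordered"])
    fix q :: "'n nat_ordered \<Rightarrow> 'n nat_ordered"
    assume q: "q \<in> {q. q permutes UNIV}"
    have "(\<Prod>j\<in>UNIV. ?Y $ j $ q j)
        = (\<Prod>i\<in>UNIV. X $ i $ (Rep_nat_ordered \<circ> q \<circ> Abs_nat_ordered) i)"
      by (rule prod.reindex_bij_witness[where i=Abs_nat_ordered and j=Rep_nat_ordered])
         (auto simp: Abs_nat_ordered_inverse Rep_nat_ordered_inverse)
    with q sign_conj_permutation
    show "of_int (sign (Rep_nat_ordered \<circ> q \<circ> Abs_nat_ordered))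
          * (\<Prod>i\<in>UNIV. X $ i $ (Rep_nat_ordered \<circ> q \<circ> Abs_nat_ordered) i)
        = of_int (sign q) * (\<Prod>j\<in>UNIV. ?Y $ j $ q j)"
         "Rep_nat_ordered \<circ> q \<circ> Abs_nat_ordered \<in> {p. p permutes UNIV}"
      by auto
  next
    fix p :: "'n \<Rightarrow> 'n"
    assume "p \<in> {p. p permutes UNIV}"
    then show "Abs_nat_ordered \<circ> p \<circ> Rep_nat_ordered \<in> {q. q permutes UNIV}"
      unfolding mem_Collect_eq permutes_univ
      by (metis Abs_nat_ordered_inverse Rep_nat_ordered_inverse UNIV_I comp_apply)
  qed (auto simp: fun_eq_iff Abs_nat_ordered_inverse Rep_nat_ordered_inverse)
  then show ?thesis
    by (simp add: det_def)
qed

lemma measure_linear_image_cart: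
  fixes f :: "real^'n::finite \<Rightarrow> real^'n"
  assumes "linear f" "compact S"
  shows "measure lebesgue (f ` S) = \<bar>det (matrix f)\<bar> * measure lebesgue S"
proof -
  define g where "g = relabel \<circ> f \<circ> unlabel"
  have "linear g"
    unfolding g_def by (intro linear_compose linear_relabel linear_unlabel assms(1))
  have "unlabel (axis j' 1) = axis (Rep_nat_ordered j') 1" for j' :: "'n nat_ordered"
    by (auto simp: unlabel_def vec_eq_iff axis_def)
       (metis Abs_nat_ordered_inverse Rep_nat_ordered_inverse UNIV_I)+
  then have "matrix g = (\<chi> j j'. matrix f $ Rep_nat_ordered j $ Rep_nat_ordered j')"
    unfolding matrix_def g_def by (simp add: relabel_def)
  then have det_g: "det (matrix g) = det (matrix f)"
    by (simp add: det_relabel)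
  have compact_images: "compact (relabel ` S)" "compact (f ` S)" "compact (g ` relabel ` S)"
    using assms \<open>linear g\<close> linear_relabel
    by (auto intro!: compact_continuous_image linear_continuous_on simp: linear_linear)
  have "g ` relabel ` S = relabel ` f ` S"
    by (simp add: g_def image_image)
  then have "measure lebesgue (f ` S) = measure lebesgue (g ` relabel ` S)"
    using compact_images measure_relabel_image[of "f ` S"] by (simp add: compact_imp_closed)
  also have "\<dots> = \<bar>det (matrix f)\<bar> * measure lebesgue (relabel ` S)"
    using \<open>linear g\<close> compact_images by (simp add: measure_linear_image lmeasurable_compact det_g)
  also have "measure lebesgue (relabel ` S) = measure lebesgue S"
    using compact_images assms measure_relabel_image[of S] by (simp add: compact_imp_closed)
  finally show ?thesis .
qed

lemma simplex_volume_le_abs_det: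
  fixes x0 :: "real^'n::finite" and xs :: "'n \<Rightarrow> real^'n"
  shows "simplex_volume x0 xs \<le> \<bar>det (\<chi> i. xs i - x0)\<bar>"
proof -
  define f where "f = (\<lambda>s. transpose (\<chi> i. xs i - x0) *v s)"
  have "linear f"
    unfolding f_def by (simp add: matrix_vector_mul_linear)
  have f_axis: "f (axis i 1) = xs i - x0" for i
    by (simp add: f_def vec_eq_iff matrix_vector_mult_def transpose_def axis_def
        if_distrib[of "\<lambda>x. _ * x"] cong: if_cong)
  define T where "T = (+) x0 ` f ` cbox 0 1"
  have "x0 \<in> T"
  proof -
    have "(0::real^'n) \<in> cbox 0 1"
      by (simp add: mem_box_cart)
    then show ?thesis
      unfolding T_def using linear_0[OF \<open>linear f\<close>] by (metis add.right_neutral image_eqI)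
  qed
  moreover have "xs i \<in> T" for i
  proof -
    have "axis i (1::real) \<in> cbox 0 1"
      by (simp add: mem_box_cart axis_def)
    then show ?thesis
      unfolding T_def using f_axis[of i] by (metis add.commute diff_add_cancel image_eqI)
  qed
  moreover have "convex T" "compact T"
    unfolding T_def using \<open>linear f\<close>
    by (auto intro!: convex_translation convex_linear_image compact_translation
        compact_continuous_image linear_continuous_on simp: linear_linear)
  ultimately have "convex hull (insert x0 (range xs)) \<subseteq> T"
    by (intro hull_minimal) auto
  moreover have "compact (convex hull (insert x0 (range xs)))"
    by (simp add: compact_convex_hull finite_imp_compact)
  ultimately have "simplex_volume x0 xs \<le> measure lebesgue T"
    unfolding simplex_volume_def using \<open>compact T\<close>
    by (intro measure_mono_fmeasurable) (auto intro: lmeasurable_compact fmeasurableD)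
  also have "\<dots> = \<bar>det (matrix f)\<bar>"
    unfolding T_def measure_translation
    using measure_linear_image_cart[OF \<open>linear f\<close>, of "cbox 0 1"] by (simp add: Cart_1)
  finally show ?thesis
    unfolding f_def matrix_of_matrix_vector_mul det_transpose .
qed

section \<open>Determinant estimates\<close>

lemma abs_det_le_fact_mult_prod:
  fixes X :: "real^'n::finite^'n"
  assumes "\<And>i. norm (X $ i) \<le> r i"
  shows "\<bar>det X\<bar> \<le> fact CARD('n) * prod r UNIV"
proof -
  have "\<bar>det X\<bar> \<le> (\<Sum>p | p permutes (UNIV::'n set). \<bar>of_int (sign p) * (\<Prod>i\<in>UNIV. X $ i $ p i)\<bar>)"
    unfolding det_def by (rule sum_abs)
  also have "\<dots> \<le> (\<Sum>p | p permutes (UNIV::'n set). prod r UNIV)"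
  proof (rule sum_mono)
    fix p :: "'n \<Rightarrow> 'n"
    have "\<bar>of_int (sign p) * (\<Prod>i\<in>UNIV. X $ i $ p i)\<bar> = (\<Prod>i\<in>UNIV. \<bar>X $ i $ p i\<bar>)"
      by (simp add: abs_mult abs_prod flip: of_int_abs)
    also have "\<dots> \<le> prod r UNIV"
      using component_le_norm_cart assms by (intro prod_mono) (fastforce intro: order_trans)
    finally show "\<bar>of_int (sign p) * (\<Prod>i\<in>UNIV. X $ i $ p i)\<bar> \<le> prod r UNIV" .
  qed
  also have "\<dots> = fact CARD('n) * prod r UNIV"
    by (simp add: card_permutations)
  finally show ?thesis .
qed

lemma det_replace_row_combination:
  fixes a :: "'n::finite \<Rightarrow> real^'n"
  shows "det (\<chi> i. if i = k then \<Sum>j\<in>UNIV. c j *\<^sub>R a j else a i) = c k * det (\<chi> i. a i)"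
proof -
  have "det (\<chi> i. if i = k then \<Sum>j\<in>UNIV. c j *\<^sub>R a j else a i)
      = (\<Sum>j\<in>UNIV. det (\<chi> i. if i = k then c j *\<^sub>R a j else a i))"
    by (rule det_linear_row_sum) simp
  also have "\<dots> = (\<Sum>j\<in>UNIV. if j = k then c k * det (\<chi> i. a i) else 0)"
  proof (rule sum.cong[OF refl])
    fix j
    have "det (\<chi> i. if i = k then c j *\<^sub>R a j else a i) = c j * det (\<chi> i. if i = k then a j else a i)"
      unfolding scalar_mult_eq_scaleR[symmetric] by (rule det_row_mul)
    moreover have "det (\<chi> i. if i = k then a j else a i) = 0" if "j \<noteq> k"
      by (rule det_identical_rows[of k j]) (use that in \<open>auto simp: row_def vec_eq_iff\<close>)
    moreover have "(\<chi> i. if i = k then a k else a i) = (\<chi> i. a i)"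
      by (simp add: vec_eq_iff)
    ultimately show "det (\<chi> i. if i = k then c j *\<^sub>R a j else a i)
        = (if j = k then c k * det (\<chi> i. a i) else 0)"
      by auto
  qed
  finally show ?thesis
    by simp
qed

lemma det_eq_0_iff_null_vector:
  fixes A :: "real^'n::finite^'n"
  shows "det A = 0 \<longleftrightarrow> (\<exists>x. x \<noteq> 0 \<and> A *v x = 0)"
  by (metis det_eq_0_rank matrix_nonfull_linear_equations_eq rank_bound min.bounded_iff
      order_less_le)

lemma det_eq_0_imp_rows_dependent:
  fixes A :: "real^'n::finite^'n"
  assumes "det A = 0"
  obtains l where "l \<noteq> 0" "(\<Sum>i\<in>UNIV. l $ i *\<^sub>R A $ i) = 0"
proof -
  have "transpose A *v l = (\<Sum>i\<in>UNIV. l $ i *\<^sub>R A $ i)" for l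
    by (simp add: vec_eq_iff matrix_vector_mult_def transpose_def mult.commute sum_component)
  then show ?thesis
    using assms det_eq_0_iff_null_vector[of "transpose A"] that by auto
qed

lemma tendsto_det:
  fixes X :: "'a \<Rightarrow> real^'n::finite^'n"
  assumes "\<And>i. ((\<lambda>t. X t $ i) \<longlongrightarrow> Y $ i) F"
  shows "((\<lambda>t. det (X t)) \<longlongrightarrow> det Y) F"
  unfolding det_def by (intro tendsto_intros assms)

lemma continuous_on_det:
  fixes X :: "'a::topological_space \<Rightarrow> real^'n::finite^'n"
  assumes "\<And>i. continuous_on S (\<lambda>t. X t $ i)"
  shows "continuous_on S (\<lambda>t. det (X t))"
  unfolding det_def by (intro continuous_intros assms continuous_on_component)

section \<open>Almost isometries and Gram matrices\<close>

definition almost_isometric :: "real \<Rightarrow> ('a::real_normed_vector \<Rightarrow> 'b::real_normed_vector) \<Rightarrow> bool" where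
  "almost_isometric \<delta> f \<longleftrightarrow>
     (\<forall>x y. \<bar>norm (f x - f y) ^ 2 - norm (x - y) ^ 2\<bar> \<le> \<delta> * norm (x - y) ^ 2)"

lemma almost_isometric_rescale:
  assumes "almost_isometric \<delta> f" "t \<noteq> 0"
  shows "almost_isometric \<delta> (\<lambda>x. (f (p + t *\<^sub>R x) - f p) /\<^sub>R t)"
  unfolding almost_isometric_def
proof (intro allI)
  fix x y
  define N where "N = norm (f (p + t *\<^sub>R x) - f (p + t *\<^sub>R y)) ^ 2"
  define n where "n = norm (x - y) ^ 2"
  have "(p + t *\<^sub>R x) - (p + t *\<^sub>R y) = t *\<^sub>R (x - y)"
    by (simp add: scaleR_diff_right)
  then have "\<bar>N - t ^ 2 * n\<bar> \<le> \<delta> * (t ^ 2 * n)"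
    using assms(1) unfolding almost_isometric_def N_def n_def
    by (metis norm_scaleR power_mult_distrib power2_abs)
  then have "\<bar>N - t ^ 2 * n\<bar> / t ^ 2 \<le> \<delta> * n"
    using assms(2) by (simp add: divide_le_eq mult.commute mult.left_commute)
  moreover have "N / t ^ 2 - n = (N - t ^ 2 * n) / t ^ 2"
    using assms(2) by (simp add: diff_divide_distrib)
  moreover have "(f (p + t *\<^sub>R x) - f p) /\<^sub>R t - (f (p + t *\<^sub>R y) - f p) /\<^sub>R t
      = (f (p + t *\<^sub>R x) - f (p + t *\<^sub>R y)) /\<^sub>R t"
    by (simp add: algebra_simps)
  moreover have "norm (v /\<^sub>R t) ^ 2 = norm v ^ 2 / t ^ 2" for v :: "'b"
    by (simp add: power_mult_distrib power_inverse divide_inverse mult.commute)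
  ultimately show "\<bar>norm ((f (p + t *\<^sub>R x) - f p) /\<^sub>R t - (f (p + t *\<^sub>R y) - f p) /\<^sub>R t) ^ 2
      - norm (x - y) ^ 2\<bar> \<le> \<delta> * norm (x - y) ^ 2"
    by (simp add: N_def n_def abs_divide)
qed

lemma almost_isometric_inner:
  fixes f :: "'a::real_inner \<Rightarrow> 'b::real_inner"
  assumes "almost_isometric \<delta> f" "f 0 = 0" "0 \<le> \<delta>"
    and "norm x \<le> d" "norm y \<le> d" "norm (x - y) \<le> d"
  shows "\<bar>f x \<bullet> f y - x \<bullet> y\<bar> \<le> 2 * \<delta> * d ^ 2"
proof -
  have polar: "2 * (v \<bullet> w) = norm v ^ 2 + norm w ^ 2 - norm (v - w) ^ 2" for v w :: "'c::real_inner"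
    by (simp add: power2_norm_eq_inner inner_diff_left inner_diff_right inner_commute)
  have "\<bar>norm (f v - f w) ^ 2 - norm (v - w) ^ 2\<bar> \<le> \<delta> * d ^ 2"
    if "norm (v - w) \<le> d" for v w
    using assms(1,3) that unfolding almost_isometric_def
    by (meson mult_left_mono norm_ge_zero order_trans power_mono)
  from this[of x 0] this[of y 0] this[of x y] assms(2,4-6)
  have "\<bar>2 * (f x \<bullet> f y) - 2 * (x \<bullet> y)\<bar> \<le> 3 * (\<delta> * d ^ 2)"
    unfolding polar by simp
  then show ?thesis
    using assms(3) by simp
qed

lemma norm_combination_sq_le:
  fixes a b :: "'i \<Rightarrow> 'a::real_inner"
  assumes "finite I" "\<And>i j. i \<in> I \<Longrightarrow> j \<in> I \<Longrightarrow> \<bar>a i \<bullet> a j - b i \<bullet> b j\<bar> \<le> K"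
    and "\<And>i. i \<in> I \<Longrightarrow> \<bar>l i\<bar> \<le> m" "(\<Sum>i\<in>I. l i *\<^sub>R b i) = 0"
  shows "norm (\<Sum>i\<in>I. l i *\<^sub>R a i) ^ 2 \<le> real (card I) ^ 2 * m ^ 2 * K"
proof -
  have gram: "norm (\<Sum>i\<in>I. l i *\<^sub>R v i) ^ 2 = (\<Sum>i\<in>I. \<Sum>j\<in>I. l i * l j * (v j \<bullet> v i))"
    for v :: "'i \<Rightarrow> 'a"
    by (simp add: power2_norm_eq_inner inner_sum_left inner_sum_right sum_distrib_left mult.assoc)
  have "norm (\<Sum>i\<in>I. l i *\<^sub>R a i) ^ 2
      = (\<Sum>i\<in>I. \<Sum>j\<in>I. l i * l j * (a j \<bullet> a i - b j \<bullet> b i))"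
    using gram[of a] gram[of b] assms(4) by (simp add: right_diff_distrib sum_subtractf)
  also have "\<dots> \<le> (\<Sum>i\<in>I. \<Sum>j\<in>I. m * m * K)"
  proof (intro sum_mono)
    fix i j
    assume "i \<in> I" "j \<in> I"
    then have "\<bar>l i * l j\<bar> \<le> m * m" "\<bar>a j \<bullet> a i - b j \<bullet> b i\<bar> \<le> K"
      using assms(2)[of j i] assms(3)[of i] assms(3)[of j] by (auto simp: abs_mult intro!: mult_mono)
    then have "\<bar>l i * l j * (a j \<bullet> a i - b j \<bullet> b i)\<bar> \<le> m * m * K"
      unfolding abs_mult[of "l i * l j"] by (intro mult_mono) auto
    then show "l i * l j * (a j \<bullet> a i - b j \<bullet> b i) \<le> m * m * K"
      by simp
  qed
  also have "\<dots> = real (card I) ^ 2 * m ^ 2 * K"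
    by (simp add: power2_eq_square)
  finally show ?thesis .
qed

lemma prod_UNIV_if_eq:
  fixes k :: "'n::finite"
  shows "(\<Prod>i\<in>UNIV. if i = k then x else y) = x * y ^ (CARD('n) - 1)"
proof -
  have "(\<Prod>i\<in>UNIV. if i = k then x else y) = x * (\<Prod>i\<in>UNIV - {k}. if i = k then x else y)"
    by (subst prod.remove[of UNIV k]) auto
  also have "(\<Prod>i\<in>UNIV - {k}. if i = k then x else y) = y ^ (CARD('n) - 1)"
    by (simp add: card_Diff_singleton)
  finally show ?thesis .
qed

text \<open>Replacing the row of largest coefficient in a dependency among the \<open>b i\<close> by the same
  combination of the \<open>a i\<close> scales the determinant by that coefficient, while the new row is short
  because its squared norm is close to that of the vanishing combination of the \<open>b i\<close>.\<close>

lemma det_sq_le_if_gram_close_to_singular: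
  fixes a b :: "'n::finite \<Rightarrow> real^'n"
  assumes gram: "\<And>i j. \<bar>a i \<bullet> a j - b i \<bullet> b j\<bar> \<le> K"
    and norm_a: "\<And>i. norm (a i) \<le> d" and singular: "det (\<chi> i. b i) = 0"
  shows "det (\<chi> i. a i) ^ 2 \<le> (fact CARD('n)) ^ 2 * real CARD('n) ^ 2 * K * d ^ (2 * (CARD('n) - 1))"
proof -
  let ?D = "CARD('n)"
  obtain l where "l \<noteq> 0" and dep: "(\<Sum>i\<in>UNIV. l $ i *\<^sub>R b i) = 0"
    using det_eq_0_imp_rows_dependent[OF singular] by auto
  define m where "m = Max (range (\<lambda>i. \<bar>l $ i\<bar>))"
  have l_le: "\<bar>l $ i\<bar> \<le> m" for i
    unfolding m_def by (intro Max_ge) auto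
  have "m \<in> range (\<lambda>i. \<bar>l $ i\<bar>)"
    unfolding m_def by (intro Max_in) auto
  then obtain k where k: "\<bar>l $ k\<bar> = m"
    by auto
  obtain i where "l $ i \<noteq> 0"
    using \<open>l \<noteq> 0\<close> by (auto simp: vec_eq_iff)
  with l_le[of i] have "m > 0"
    by linarith
  define u where "u = (\<Sum>j\<in>UNIV. l $ j *\<^sub>R a j)"
  have u_sq: "norm u ^ 2 \<le> real ?D ^ 2 * m ^ 2 * K"
    unfolding u_def using norm_combination_sq_le[of UNIV a b, OF _ _ l_le dep] gram by simp
  have "m * \<bar>det (\<chi> i. a i)\<bar> = \<bar>det (\<chi> i. if i = k then u else a i)\<bar>"
    unfolding u_def det_replace_row_combination k[symmetric] by (simp add: abs_mult)
  also have "\<dots> \<le> fact ?D * (\<Prod>i\<in>UNIV. if i = k then norm u else d)"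
    by (rule abs_det_le_fact_mult_prod) (simp add: norm_a)
  also have "\<dots> = fact ?D * norm u * d ^ (?D - 1)"
    by (simp add: prod_UNIV_if_eq)
  finally have "(m * \<bar>det (\<chi> i. a i)\<bar>) ^ 2 \<le> (fact ?D * norm u * d ^ (?D - 1)) ^ 2"
    by (rule power_mono) (use \<open>m > 0\<close> in simp)
  also have "\<dots> = (fact ?D) ^ 2 * norm u ^ 2 * d ^ (2 * (?D - 1))"
    by (simp add: power_mult_distrib power_even_eq)
  also have "\<dots> \<le> (fact ?D) ^ 2 * (real ?D ^ 2 * m ^ 2 * K) * d ^ (2 * (?D - 1))"
    using u_sq by (intro mult_right_mono mult_left_mono) (auto simp: power_mult)
  finally have "m ^ 2 * det (\<chi> i. a i) ^ 2
      \<le> m ^ 2 * ((fact ?D) ^ 2 * real ?D ^ 2 * K * d ^ (2 * (?D - 1)))"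
    by (simp add: power_mult_distrib mult_ac)
  then show ?thesis
    using \<open>m > 0\<close> by simp
qed

section \<open>Distorted diffeomorphisms are almost isometric\<close>

lemma sq_norm_diff_le_if_derivative_bound:
  fixes g :: "'a::{real_normed_vector, perfect_space} \<Rightarrow> 'b::real_normed_vector"
  assumes "\<And>z. (g has_derivative g' z) (at z)" "\<And>z v. norm (g' z v) ^ 2 \<le> c * norm v ^ 2"
    and "0 \<le> c"
  shows "norm (g x - g y) ^ 2 \<le> c * norm (x - y) ^ 2"
proof -
  have "norm (g' z v) \<le> sqrt c * norm v" for z v
    using real_sqrt_le_mono[OF assms(2)[of z v]] by (simp add: real_sqrt_mult)
  then have "onorm (g' z) \<le> sqrt c" for z
    by (rule onorm_le)
  then have "norm (g x - g y) \<le> sqrt c * norm (x - y)"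
    using assms(1) by (intro differentiable_bound[where S=UNIV]) auto
  then have "norm (g x - g y) ^ 2 \<le> (sqrt c * norm (x - y)) ^ 2"
    by (intro power_mono) auto
  then show ?thesis
    using assms(3) by (simp add: power_mult_distrib)
qed

lemma proper_distorted_diffeoD:
  assumes "proper_distorted_diffeo \<delta> \<Phi>"
  shows "bij \<Phi>"
    and "(\<Phi> has_derivative frechet_derivative \<Phi> (at x)) (at x)"
    and "(inv \<Phi> has_derivative frechet_derivative (inv \<Phi>) (at x)) (at x)"
    and "det (matrix (frechet_derivative \<Phi> (at x))) > 0"
    and "inverse (1 + \<delta>) * norm v ^ 2 \<le> norm (frechet_derivative \<Phi> (at x) v) ^ 2"
    and "norm (frechet_derivative \<Phi> (at x) v) ^ 2 \<le> (1 + \<delta>) * norm v ^ 2"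
proof -
  from assms have "\<Phi> differentiable (at x)" "inv \<Phi> differentiable (at x)"
    unfolding proper_distorted_diffeo_def diffeo_def by auto
  then show "(\<Phi> has_derivative frechet_derivative \<Phi> (at x)) (at x)"
      "(inv \<Phi> has_derivative frechet_derivative (inv \<Phi>) (at x)) (at x)"
    by (simp_all add: frechet_derivative_works)
  then have "matrix (frechet_derivative \<Phi> (at x)) *v v = frechet_derivative \<Phi> (at x) v"
    by (simp add: has_derivative_linear matrix_works)
  with assms show "bij \<Phi>" "det (matrix (frechet_derivative \<Phi> (at x))) > 0"
      "inverse (1 + \<delta>) * norm v ^ 2 \<le> norm (frechet_derivative \<Phi> (at x) v) ^ 2"
      "norm (frechet_derivative \<Phi> (at x) v) ^ 2 \<le> (1 + \<delta>) * norm v ^ 2"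
    unfolding proper_distorted_diffeo_def diffeo_def Let_def power2_norm_eq_inner
    by metis+
qed

lemma proper_distorted_diffeo_sq_dist_le:
  assumes "proper_distorted_diffeo \<delta> \<Phi>" "0 \<le> \<delta>"
  shows "norm (\<Phi> x - \<Phi> y) ^ 2 \<le> (1 + \<delta>) * norm (x - y) ^ 2"
  using assms
  by (intro sq_norm_diff_le_if_derivative_bound[where g'="\<lambda>z. frechet_derivative \<Phi> (at z)"]
      proper_distorted_diffeoD) auto

lemma proper_distorted_diffeo_sq_dist_ge:
  assumes "proper_distorted_diffeo \<delta> \<Phi>" "0 \<le> \<delta>"
  shows "norm (x - y) ^ 2 \<le> (1 + \<delta>) * norm (\<Phi> x - \<Phi> y) ^ 2"
proof -
  note \<Phi> = proper_distorted_diffeoD[OF assms(1)]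
  have inv_\<Phi>: "inv \<Phi> (\<Phi> z) = z" "\<Phi> (inv \<Phi> z) = z" for z
    using \<Phi>(1) by (simp_all add: bij_is_inj bij_is_surj surj_f_inv_f)
  have "norm (frechet_derivative (inv \<Phi>) (at z) v) ^ 2 \<le> (1 + \<delta>) * norm v ^ 2" for z v
  proof -
    let ?g = "frechet_derivative (inv \<Phi>) (at z)"
    let ?f = "frechet_derivative \<Phi> (at (inv \<Phi> z))"
    have "((\<Phi> \<circ> inv \<Phi>) has_derivative (?f \<circ> ?g)) (at z)"
      by (rule diff_chain_at) (use \<Phi>(2,3) in auto)
    moreover have "\<Phi> \<circ> inv \<Phi> = id"
      by (simp add: fun_eq_iff inv_\<Phi>)
    ultimately have "?f \<circ> ?g = id"
      using has_derivative_unique[OF has_derivative_id] by metis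
    then have "inverse (1 + \<delta>) * norm (?g v) ^ 2 \<le> norm v ^ 2"
      using \<Phi>(5)[where x="inv \<Phi> z" and v="?g v"] by (simp add: fun_eq_iff)
    then show ?thesis
      using assms(2) by (simp add: field_simps)
  qed
  then have "norm (inv \<Phi> (\<Phi> x) - inv \<Phi> (\<Phi> y)) ^ 2 \<le> (1 + \<delta>) * norm (\<Phi> x - \<Phi> y) ^ 2"
    using assms(2) \<Phi>(3)
    by (intro sq_norm_diff_le_if_derivative_bound[where g'="\<lambda>z. frechet_derivative (inv \<Phi>) (at z)"])
       auto
  then show ?thesis
    by (simp add: inv_\<Phi>)
qed

lemma almost_isometric_if_sq_dist_bounds:
  assumes "\<And>x y. norm (f x - f y) ^ 2 \<le> (1 + \<delta>) * norm (x - y) ^ 2"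
    and "\<And>x y. norm (x - y) ^ 2 \<le> (1 + \<delta>) * norm (f x - f y) ^ 2"
    and "0 \<le> \<delta>"
  shows "almost_isometric \<delta> f"
  unfolding almost_isometric_def
proof (intro allI)
  fix x y
  have "\<delta> * norm (f x - f y) ^ 2 \<le> \<delta> * norm (x - y) ^ 2"
    if "norm (f x - f y) \<le> norm (x - y)"
    using that assms(3) by (intro mult_left_mono power_mono) auto
  then show "\<bar>norm (f x - f y) ^ 2 - norm (x - y) ^ 2\<bar> \<le> \<delta> * norm (x - y) ^ 2"
    using assms(1,2)[of x y] by (cases "norm (f x - f y) \<le> norm (x - y)") (auto simp: algebra_simps)
qed

lemma proper_distorted_diffeo_almost_isometric:
  assumes "proper_distorted_diffeo \<delta> \<Phi>" "0 \<le> \<delta>"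
  shows "almost_isometric \<delta> \<Phi>"
  using assms
  by (intro almost_isometric_if_sq_dist_bounds proper_distorted_diffeo_sq_dist_le
      proper_distorted_diffeo_sq_dist_ge)

section \<open>A singular secant matrix\<close>

lemma tendsto_difference_quotient:
  fixes f :: "'a::real_normed_vector \<Rightarrow> 'b::real_normed_vector"
  assumes "(f has_derivative f') (at p)"
  shows "((\<lambda>t. (f (p + t *\<^sub>R v) - f p) /\<^sub>R t) \<longlongrightarrow> f' v) (at_right 0)"
proof -
  have "((\<lambda>t. p + t *\<^sub>R v) has_derivative (\<lambda>t. t *\<^sub>R v)) (at 0)"
    by (auto intro!: derivative_eq_intros)
  from diff_chain_at[OF this] assms
  have "((\<lambda>t. f (p + t *\<^sub>R v)) has_derivative (\<lambda>t. f' (t *\<^sub>R v))) (at 0)"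
    by (simp add: o_def)
  then have "((\<lambda>t. f (p + t *\<^sub>R v)) has_derivative (\<lambda>t. t *\<^sub>R f' v)) (at 0 within {0<..})"
    by (auto simp: linear_cmul[OF has_derivative_linear[OF assms]] intro: has_derivative_subset)
  then have "((\<lambda>y. (f (p + y *\<^sub>R v) - f (p + 0 *\<^sub>R v) - (y - 0) *\<^sub>R f' v) /\<^sub>R norm (y - 0))
      \<longlongrightarrow> 0) (at_right 0)"
    by (simp add: has_derivative_at_within)
  moreover have "\<forall>\<^sub>F y in at_right 0.
      (f (p + y *\<^sub>R v) - f (p + 0 *\<^sub>R v) - (y - 0) *\<^sub>R f' v) /\<^sub>R norm (y - 0)
        = (f (p + y *\<^sub>R v) - f p) /\<^sub>R y - f' v"
    by (rule eventually_at_rightI[of 0 1]) (auto simp: scaleR_diff_right)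
  ultimately have "((\<lambda>y. (f (p + y *\<^sub>R v) - f p) /\<^sub>R y - f' v) \<longlongrightarrow> 0) (at_right 0)"
    using tendsto_cong by fastforce
  then show ?thesis
    by (simp add: Lim_null[symmetric])
qed

lemma det_rows_matrix_vector_mult:
  fixes M :: "real^'n::finite^'n"
  shows "det (\<chi> i. M *v a i) = det (\<chi> i. a i) * det M"
proof -
  have "(\<chi> i. M *v a i) = (\<chi> i. a i) ** transpose M"
    by (simp add: vec_eq_iff matrix_matrix_mult_def matrix_vector_mult_def transpose_def mult.commute)
  then show ?thesis
    by (simp add: det_mul)
qed

lemma singular_secant_matrix:
  fixes f :: "real^'n::finite \<Rightarrow> real^'n" and a :: "'n \<Rightarrow> real^'n"
  assumes "continuous_on UNIV f" "(f has_derivative f') (at p)" "det (matrix f') > 0"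
    and "det (\<chi> i. f (p + a i) - f p) * det (\<chi> i. a i) < 0"
  obtains t where "t > 0" "det (\<chi> i. (f (p + t *\<^sub>R a i) - f p) /\<^sub>R t) = 0"
proof -
  define g where "g t = det (\<chi> i. (f (p + t *\<^sub>R a i) - f p) /\<^sub>R t) * det (\<chi> i. a i)" for t
  have "g 1 < 0"
    using assms(4) by (simp add: g_def)
  then have "det (\<chi> i. a i) \<noteq> 0"
    by (auto simp: g_def)
  have "matrix f' *v a i = f' (a i)" for i
    using has_derivative_linear[OF assms(2)] by (simp add: matrix_works)
  then have "((\<lambda>t. det (\<chi> i. (f (p + t *\<^sub>R a i) - f p) /\<^sub>R t)) \<longlongrightarrow> det (\<chi> i. matrix f' *v a i))
      (at_right 0)"
    by (intro tendsto_det) (simp add: tendsto_difference_quotient[OF assms(2)])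
  then have "((\<lambda>t. det (\<chi> i. (f (p + t *\<^sub>R a i) - f p) /\<^sub>R t)) \<longlongrightarrow> det (\<chi> i. a i) * det (matrix f'))
      (at_right 0)"
    by (simp add: det_rows_matrix_vector_mult)
  then have "(g \<longlongrightarrow> det (\<chi> i. a i) ^ 2 * det (matrix f')) (at_right 0)"
    unfolding g_def power2_eq_square by (auto intro: tendsto_eq_intros)
  moreover have "det (\<chi> i. a i) ^ 2 * det (matrix f') > 0"
    using \<open>det (\<chi> i. a i) \<noteq> 0\<close> assms(3) by simp
  ultimately have "\<forall>\<^sub>F t in at_right 0. g t > 0"
    by (rule order_tendstoD(1))
  then obtain r where "r > 0" and g_pos: "\<And>t. 0 < t \<Longrightarrow> t < r \<Longrightarrow> g t > 0"
    unfolding eventually_at_right_field by auto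
  define t0 where "t0 = min (r / 2) 1"
  have "0 < t0" "t0 \<le> 1" "g t0 > 0"
    using \<open>r > 0\<close> g_pos[of t0] by (auto simp: t0_def)
  have "continuous_on {t0..1} g"
    unfolding g_def using \<open>0 < t0\<close>
    by (intro continuous_intros continuous_on_det continuous_on_vec_lambda
        continuous_on_compose2[OF assms(1)]) auto
  then obtain t where "t0 \<le> t" "g t = 0"
    using IVT2'[of g 1 0 t0] \<open>g 1 < 0\<close> \<open>g t0 > 0\<close> \<open>t0 \<le> 1\<close> by auto
  then show ?thesis
    using \<open>0 < t0\<close> \<open>det (\<chi> i. a i) \<noteq> 0\<close> by (intro that[of t]) (auto simp: g_def)
qed

section \<open>Negative blocks do not extend\<close>

lemma negative_block_nondegenerate:
  assumes "negative_block \<eta> E \<phi> x0 xs"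
  shows "det (\<chi> i. xs i - x0) \<noteq> 0"
proof
  assume "det (\<chi> i. xs i - x0) = 0"
  then obtain w where "w \<noteq> 0" "(\<chi> i. xs i - x0) *v w = 0"
    using det_eq_0_iff_null_vector by blast
  moreover have "((\<chi> i. xs i - x0) *v w) $ i = w \<bullet> (xs i - x0)" for i
    by (simp add: matrix_vector_mult_def inner_vec_def mult.commute)
  ultimately have w_xs: "w \<bullet> xs i = w \<bullet> x0" for i
    by (metis inner_diff_right right_minus_eq zero_index)
  from assms obtain L b where Lb: "interpolates L b \<phi> x0 xs"
    and unique: "\<exists>!Lb. interpolates (fst Lb) (snd Lb) \<phi> x0 xs"
    unfolding negative_block_def by auto
  have "(L + (\<chi> r c. w $ c)) *v x = L *v x + (\<chi> r. w \<bullet> x)" for x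
    by (simp add: matrix_vector_mult_def vec_eq_iff inner_vec_def algebra_simps sum.distrib)
  then have "interpolates (L + (\<chi> r c. w $ c)) (b - (\<chi> r. w \<bullet> x0)) \<phi> x0 xs"
    using Lb w_xs unfolding interpolates_def by (auto simp: algebra_simps)
  with Lb unique have "L + (\<chi> r c. w $ c) = L"
    by (metis fst_conv snd_conv)
  then show False
    using \<open>w \<noteq> 0\<close> by (simp add: vec_eq_iff)
qed

lemma negative_block_distortion_bound:
  fixes \<Phi> :: "real^'n::finite \<Rightarrow> real^'n"
  assumes \<Phi>: "proper_distorted_diffeo \<delta> \<Phi>" "0 \<le> \<delta>"
    and block: "negative_block \<eta> E \<phi> x0 xs" "0 \<le> \<eta>" and extends: "\<forall>x\<in>E. \<Phi> x = \<phi> x"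
  shows "\<eta> ^ (2 * CARD('n)) \<le> 2 * real CARD('n) ^ 2 * (fact CARD('n)) ^ 2 * \<delta>"
proof -
  let ?D = "CARD('n)"
  define a where "a i = xs i - x0" for i
  define d where "d = tuple_diam x0 xs"
  have "det (\<chi> i. a i) \<noteq> 0"
    using negative_block_nondegenerate[OF block(1)] by (simp add: a_def)
  from block(1) obtain L b where "interpolates L b \<phi> x0 xs" "det L < 0"
    unfolding negative_block_def by (metis fst_conv snd_conv)
  then have La: "L *v a i = \<Phi> (x0 + a i) - \<Phi> x0" for i
    using block(1) extends
    by (simp add: a_def interpolates_def negative_block_def matrix_vector_mult_diff_distrib)
       (metis add_diff_cancel_right)
  have "det (\<chi> i. \<Phi> (x0 + a i) - \<Phi> x0) * det (\<chi> i. a i) = det (\<chi> i. a i) ^ 2 * det L"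
    using det_rows_matrix_vector_mult[of L a] by (simp add: La power2_eq_square mult_ac)
  then have "det (\<chi> i. \<Phi> (x0 + a i) - \<Phi> x0) * det (\<chi> i. a i) < 0"
    using \<open>det L < 0\<close> \<open>det (\<chi> i. a i) \<noteq> 0\<close> by (simp add: mult_pos_neg)
  moreover have "continuous_on UNIV \<Phi>"
    using proper_distorted_diffeoD(2)[OF \<Phi>(1)]
    by (meson has_derivative_continuous continuous_at_imp_continuous_on)
  ultimately obtain t where "t > 0"
    and singular: "det (\<chi> i. (\<Phi> (x0 + t *\<^sub>R a i) - \<Phi> x0) /\<^sub>R t) = 0"
    using singular_secant_matrix proper_distorted_diffeoD(2,4)[OF \<Phi>(1), where x=x0] by blast
  define g where "g x = (\<Phi> (x0 + t *\<^sub>R x) - \<Phi> x0) /\<^sub>R t" for x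
  have "almost_isometric \<delta> g"
    unfolding g_def using \<open>t > 0\<close>
    by (intro almost_isometric_rescale proper_distorted_diffeo_almost_isometric \<Phi>) auto
  have bounded: "bounded (insert x0 (range xs))"
    by (simp add: finite_imp_bounded)
  have norm_a: "norm (a i) \<le> d" and "norm (a i - a j) \<le> d" for i j
    using diameter_bounded_bound[OF bounded, of "xs i"] unfolding d_def tuple_diam_def a_def
    by (auto simp: dist_norm)
  then have gram: "\<bar>a i \<bullet> a j - g (a i) \<bullet> g (a j)\<bar> \<le> 2 * \<delta> * d ^ 2" for i j
    using almost_isometric_inner[OF \<open>almost_isometric \<delta> g\<close>] \<Phi>(2)
    by (simp add: g_def abs_minus_commute)
  have "det (\<chi> i. g (a i)) = 0"
    using singular by (simp add: g_def)
  then have "det (\<chi> i. a i) ^ 2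
      \<le> (fact ?D) ^ 2 * real ?D ^ 2 * (2 * \<delta> * d ^ 2) * d ^ (2 * (?D - 1))"
    by (intro det_sq_le_if_gram_close_to_singular[where b="\<lambda>i. g (a i)"] gram norm_a)
  also have "\<dots> = 2 * real ?D ^ 2 * (fact ?D) ^ 2 * \<delta> * (d ^ 2 * d ^ (2 * (?D - 1)))"
    by (simp add: mult_ac)
  also have "d ^ 2 * d ^ (2 * (?D - 1)) = d ^ (2 * ?D)"
  proof -
    have "2 * ?D = 2 + 2 * (?D - 1)"
      using zero_less_card_finite[where 'a='n] by arith
    then show ?thesis
      by (metis power_add)
  qed
  finally have upper: "det (\<chi> i. a i) ^ 2 \<le> 2 * real ?D ^ 2 * (fact ?D) ^ 2 * \<delta> * d ^ (2 * ?D)" .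
  have "0 \<le> d"
    unfolding d_def tuple_diam_def using bounded by (rule diameter_ge_0)
  moreover have "(\<eta> * d) ^ ?D \<le> \<bar>det (\<chi> i. a i)\<bar>"
    using block(1) simplex_volume_le_abs_det[of x0 xs]
    by (simp add: negative_block_def power_mult_distrib a_def d_def)
  ultimately have "((\<eta> * d) ^ ?D) ^ 2 \<le> \<bar>det (\<chi> i. a i)\<bar> ^ 2"
    using block(2) by (intro power_mono) auto
  then have lower: "\<eta> ^ (2 * ?D) * d ^ (2 * ?D) \<le> det (\<chi> i. a i) ^ 2"
    by (simp add: power_mult_distrib power_even_eq)
  have "d \<noteq> 0"
  proof
    assume "d = 0"
    then have "det (\<chi> i. a i) ^ 2 \<le> 0"
      using upper zero_less_card_finite[where 'a='n] by (simp add: power_0_left)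
    with \<open>det (\<chi> i. a i) \<noteq> 0\<close> show False
      by simp
  qed
  with \<open>0 \<le> d\<close> have "d ^ (2 * ?D) > 0"
    by simp
  with lower upper show ?thesis
    using mult_le_cancel_right_pos by (meson order_trans)
qed

lemma mult_exp_neg_less_pow:
  fixes \<epsilon> N :: real
  assumes "0 < \<epsilon>" "\<epsilon> < 1 / N"
  shows "N * exp (- real (m + 1) / \<epsilon>) < exp (- 1 / \<epsilon>) ^ m"
proof -
  define \<eta> where "\<eta> = exp (- 1 / \<epsilon>)"
  have "0 < 1 / N"
    using assms by linarith
  then have "0 < N"
    by simp
  then have "N < 1 / \<epsilon>"
    using assms by (simp add: field_simps)
  then have "N * \<eta> < N * exp (- N)"
    using \<open>0 < N\<close> by (simp add: \<eta>_def)
  also have "\<dots> < exp N * exp (- N)"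
    using exp_ge_add_one_self[of N] by (intro mult_strict_right_mono) (linarith, simp)
  finally have "N * \<eta> < 1"
    by (simp flip: exp_add)
  then have "(N * \<eta>) * \<eta> ^ m < \<eta> ^ m"
    by (simp add: \<eta>_def)
  moreover have "exp (- real (m + 1) / \<epsilon>) = \<eta> ^ m * \<eta>"
  proof -
    have "- real (m + 1) / \<epsilon> = real (m + 1) * (- 1 / \<epsilon>)"
      by (simp add: divide_inverse algebra_simps)
    then show ?thesis
      unfolding \<eta>_def by (simp only: exp_of_nat_mult power_Suc2 Suc_eq_plus1[symmetric])
  qed
  ultimately show ?thesis
    by (simp add: \<eta>_def mult_ac)
qed

lemma negative_block_not_extendable:
  fixes \<phi> :: "real^'n::finite \<Rightarrow> real^'n"
  assumes "0 < \<epsilon>" "\<epsilon> < 1 / (2 * real CARD('n) ^ 2 * (fact CARD('n)) ^ 2)"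
    and "has_negative_block (exp (- 1 / \<epsilon>)) E \<phi>"
  shows "\<not> (\<exists>\<Phi>. proper_distorted_diffeo (exp (- real (2 * CARD('n) + 1) / \<epsilon>)) \<Phi> \<and> (\<forall>x\<in>E. \<Phi> x = \<phi> x))"
proof
  let ?D = "CARD('n)"
  assume "\<exists>\<Phi>. proper_distorted_diffeo (exp (- real (2 * ?D + 1) / \<epsilon>)) \<Phi> \<and> (\<forall>x\<in>E. \<Phi> x = \<phi> x)"
  then obtain \<Phi> where \<Phi>: "proper_distorted_diffeo (exp (- real (2 * ?D + 1) / \<epsilon>)) \<Phi>"
    and extends: "\<forall>x\<in>E. \<Phi> x = \<phi> x"
    by blast
  obtain x0 xs where "negative_block (exp (- 1 / \<epsilon>)) E \<phi> x0 xs"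
    using assms(3) unfolding has_negative_block_def by blast
  from negative_block_distortion_bound[OF \<Phi> _ this _ extends]
  have "exp (- 1 / \<epsilon>) ^ (2 * ?D)
      \<le> 2 * real ?D ^ 2 * (fact ?D) ^ 2 * exp (- real (2 * ?D + 1) / \<epsilon>)"
    by simp
  then show False
    using mult_exp_neg_less_pow[OF assms(1,2), of "2 * ?D"] by simp
qed

theorem theorem1p11:
  fixes k :: nat
  assumes "CARD('n::finite) \<ge> 2" and "k \<ge> 1"
  shows "\<exists>c C' C''. c > 0 \<and> C' > 0 \<and> C'' > 0 \<and>
    (\<forall>(\<epsilon>::real) (E :: (real^'n) set) (\<phi> :: real^'n \<Rightarrow> real^'n).
       0 < \<epsilon> \<and> \<epsilon> < c \<and> finite E \<and> card E \<le> k \<and>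
       (\<forall>x\<in>E. \<forall>y\<in>E. inverse (1 + exp (- C'' / \<epsilon>)) * norm (x - y) \<le> norm (\<phi> x - \<phi> y) \<and>
                      norm (\<phi> x - \<phi> y) \<le> (1 + exp (- C'' / \<epsilon>)) * norm (x - y)) \<and>
       has_negative_block (exp (- C' / \<epsilon>)) E \<phi>
       \<longrightarrow> \<not> (\<exists>\<Phi>. proper_distorted_diffeo (exp (- C'' / \<epsilon>)) \<Phi> \<and> (\<forall>x\<in>E. \<Phi> x = \<phi> x)))"
  by (rule exI[of _ "1 / (2 * real CARD('n) ^ 2 * (fact CARD('n)) ^ 2)"], rule exI[of _ 1],
      rule exI[of _ "real (2 * CARD('n) + 1)"], intro conjI allI impI)
     (simp, simp, simp, elim conjE, rule negative_block_not_extendable)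

end
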